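(* Let $n_0,n_1\ge 0$ and $m$ be integers with $0<m\le n_0+n_1$, and let $X\sim\mathrm{Hyper}(n_0,n_1;m)$, i.e. $$\mathbb P(X=k)=\frac{\binom{n_0}{k}\binom{n_1}{m-k}}{\binom{n_0+n_1}{m}}.$$ Set $Y=X/(1+m-X)$. Then $$\mathbb E Y=\frac{n_0}{1+n_1}\left(1-\frac{\binom{n_0-1}{m}}{\binom{n_0+n_1}{m}}\right).$$ In particular, $\mathbb E Y\le \frac{n_0}{1+n_1}$ for every such $m$.
   Context: Binomial coefficient conventions: $\binom{0}{0}=1$, and $\binom{n}{k}=0$ if $n<0$, or if $k<0$, or if $k>n$. *)

theory Defs
  imports Complex_Main
begin

definition ibinom :: "int \<Rightarrow> int \<Rightarrow> real" where
  "ibinom n k = (if n < 0 \<or> k < 0 \<or> k > n then 0 else real (nat n choose nat k))"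

definition hyper_pmf :: "int \<Rightarrow> int \<Rightarrow> int \<Rightarrow> int \<Rightarrow> real" where
  "hyper_pmf n0 n1 m k = ibinom n0 k * ibinom n1 (m - k) / ibinom (n0 + n1) m"

definition hyper_EY :: "int \<Rightarrow> int \<Rightarrow> int \<Rightarrow> real" where
  "hyper_EY n0 n1 m = (\<Sum>k\<in>{0..m}. hyper_pmf n0 n1 m k * (real_of_int k / (1 + real_of_int m - real_of_int k)))"

end

theory Submission
  imports Defs
begin

text \<open>Absorbing the weight k/(M+1-k) into the binomials gives
  (b+1) P(X=k) k/(M+1-k) \<propto> a C(a-1,k-1) C(b+1,M+1-k), so (b+1) E Y is a times a
  Vandermonde convolution C(a-1,\<cdot>) * C(b+1,\<cdot>) from which only the term j = M is missing;
  that term is C(a-1,M).\<close>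

lemma ibinom_of_nat: "ibinom (int n) (int k) = real (n choose k)"
  by (simp add: ibinom_def)

lemma ibinom_of_nat_diff:
  assumes "k \<le> m"
  shows "ibinom (int n) (int m - int k) = real (n choose (m - k))"
  using assms ibinom_of_nat[of n "m - k"] by (simp add: of_nat_diff)

lemma ibinom_nonneg: "ibinom n k \<ge> 0"
  by (simp add: ibinom_def)

text \<open>For a = 0 the integer binomial with top entry -1 vanishes while the truncated
  a - 1 gives 0; the factor a makes the difference irrelevant.\<close>

lemma of_nat_mult_ibinom_pred:
  "real a * ibinom (int a - 1) k = real a * ibinom (int (a - 1)) k"
  by (cases a) auto

lemma choose_weighted_absorb:
  fixes a b M k :: nat
  assumes "1 \<le> k" "k \<le> M"
  shows "(real b + 1) * (real (a choose k) * real (b choose (M - k)) * (real k / (1 + real M - real k)))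
         = real a * real ((a - 1) choose (k - 1)) * real (Suc b choose (M + 1 - k))"
proof -
  have gap: "real (M + 1 - k) = 1 + real M - real k" and pos: "1 + real M - real k > 0"
    using assms by (simp_all add: of_nat_diff)
  have absorb_a: "real k * real (a choose k) = real a * real ((a - 1) choose (k - 1))"
    using times_binomial_minus1_eq[of k a] assms by (simp flip: of_nat_mult)
  have "(b + 1) * (b choose (M - k)) = (Suc b choose (M + 1 - k)) * (M + 1 - k)"
    using Suc_times_binomial_eq[of b "M - k"] assms by (simp add: Suc_diff_le)
  then have absorb_b: "(real b + 1) * real (b choose (M - k))
                       = real (Suc b choose (M + 1 - k)) * (1 + real M - real k)"
    unfolding gap[symmetric] by (metis of_nat_1 of_nat_add of_nat_mult)
  have "(real b + 1) * (real (a choose k) * real (b choose (M - k)) * (real k / (1 + real M - real k)))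
        = (real k * real (a choose k)) * ((real b + 1) * real (b choose (M - k))) / (1 + real M - real k)"
    by (simp add: algebra_simps)
  also have "\<dots> = real a * real ((a - 1) choose (k - 1)) * real (Suc b choose (M + 1 - k))"
    unfolding absorb_a absorb_b using pos by simp
  finally show ?thesis .
qed

lemma vandermonde_drop_last:
  fixes a b M :: nat
  shows "(\<Sum>k\<in>{1..M}. (a choose (k - 1)) * (Suc b choose (M + 1 - k))) + (a choose M)
         = (a + Suc b) choose M"
proof -
  have "(\<Sum>k\<in>{1..M}. (a choose (k - 1)) * (Suc b choose (M + 1 - k)))
        = (\<Sum>j<M. (a choose j) * (Suc b choose (M - j)))"
    by (rule sum.reindex_bij_witness[where i = Suc and j = "\<lambda>k. k - 1"]) auto
  also have "\<dots> + (a choose M) = (\<Sum>j\<le>M. (a choose j) * (Suc b choose (M - j)))"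
    by (simp add: lessThan_Suc_atMost[symmetric])
  also have "\<dots> = (a + Suc b) choose M"
    by (rule vandermonde)
  finally show ?thesis .
qed

lemma sum_choose_weighted:
  fixes a b M :: nat
  shows "(real b + 1) * (\<Sum>k\<le>M. real (a choose k) * real (b choose (M - k)) * (real k / (1 + real M - real k)))
         = real a * (real ((a + b) choose M) - real ((a - 1) choose M))"
proof (cases a)
  case 0
  then show ?thesis by (auto intro!: sum.neutral)
next
  case (Suc a')
  define S where "S = (\<Sum>k\<in>{1..M}. (a' choose (k - 1)) * (Suc b choose (M + 1 - k)))"
  have "S + (a' choose M) = (a + b) choose M"
    using vandermonde_drop_last[of a' b M] Suc by (simp add: S_def)
  then have S: "real S = real ((a + b) choose M) - real ((a - 1) choose M)"
    using Suc by (metis add_diff_cancel_right' diff_Suc_1 of_nat_add)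
  have "{..M} = insert 0 {1..M}" by auto
  then have "(real b + 1) * (\<Sum>k\<le>M. real (a choose k) * real (b choose (M - k)) * (real k / (1 + real M - real k)))
             = (\<Sum>k\<in>{1..M}. (real b + 1) * (real (a choose k) * real (b choose (M - k)) * (real k / (1 + real M - real k))))"
    by (simp add: sum_distrib_left)
  also have "\<dots> = (\<Sum>k\<in>{1..M}. real a * real (a' choose (k - 1)) * real (Suc b choose (M + 1 - k)))"
    using Suc by (intro sum.cong refl) (use choose_weighted_absorb[of _ M b a] in auto)
  also have "\<dots> = real a * real S"
    by (simp add: S_def sum_distrib_left mult.assoc)
  finally show ?thesis
    unfolding S .
qed

lemma hyper_EY_of_nat:
  "hyper_EY (int a) (int b) (int M)
   = (\<Sum>k\<le>M. real (a choose k) * real (b choose (M - k)) * (real k / (1 + real M - real k)))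
     / real ((a + b) choose M)"
proof -
  have "{0..int M} = int ` {..M}"
    by (auto simp: image_iff intro!: bexI[where x = "nat _"])
  then have "hyper_EY (int a) (int b) (int M)
             = (\<Sum>k\<le>M. hyper_pmf (int a) (int b) (int M) (int k) * (real k / (1 + real M - real k)))"
    by (simp add: hyper_EY_def sum.reindex)
  also have "\<dots> = (\<Sum>k\<le>M. real (a choose k) * real (b choose (M - k)) * (real k / (1 + real M - real k))
                      / real ((a + b) choose M))"
    by (intro sum.cong refl)
       (simp add: hyper_pmf_def ibinom_of_nat ibinom_of_nat_diff flip: of_nat_add)
  finally show ?thesis
    by (simp add: sum_divide_distrib)
qed

theorem lemma2:
  fixes n0 n1 m :: int
  assumes "n0 \<ge> 0" and "n1 \<ge> 0" and "0 < m" and "m \<le> n0 + n1"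
  shows "hyper_EY n0 n1 m
           = real_of_int n0 / (1 + real_of_int n1) * (1 - ibinom (n0 - 1) m / ibinom (n0 + n1) m)
         \<and> hyper_EY n0 n1 m \<le> real_of_int n0 / (1 + real_of_int n1)"
proof -
  obtain a b M where n: "n0 = int a" "n1 = int b" "m = int M"
    using assms by (metis nonneg_int_cases less_imp_le)
  define C where "C = real ((a + b) choose M)"
  have C_pos: "C > 0"
    using assms by (simp add: C_def n)
  have C: "ibinom (n0 + n1) m = C"
    by (simp add: n C_def ibinom_of_nat flip: of_nat_add)
  have "hyper_EY n0 n1 m = real a * (C - real ((a - 1) choose M)) / ((real b + 1) * C)"
    using sum_choose_weighted[of b a M] C_pos
    by (simp add: n hyper_EY_of_nat flip: C_def) (simp add: divide_simps mult.commute)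
  also have "\<dots> = real a / (1 + real b) * (1 - ibinom (n0 - 1) m / C)"
    using C_pos of_nat_mult_ibinom_pred[of a "int M"]
    by (simp add: n ibinom_of_nat field_simps)
  finally have "hyper_EY n0 n1 m = real a / (1 + real b) * (1 - ibinom (n0 - 1) m / C)" .
  moreover have "real a / (1 + real b) * (1 - ibinom (n0 - 1) m / C) \<le> real a / (1 + real b)"
    using C_pos ibinom_nonneg[of "n0 - 1" m] by (intro mult_left_le) auto
  ultimately show ?thesis
    unfolding C by (simp add: n)
qed

end
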